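(* Let $\mathcal{L}:\mathbb{R}^n\to\mathbb{R}$ be differentiable with $L$-Lipschitz gradient ($L>0$). Fix $\delta_0>0$, $\varepsilon\ge0$, $\eta_{\mathrm{FCM}}>0$. Let $\mathbf{x}_k\ne\mathbf{0}$ with $\mathbf{g}_k=\nabla\mathcal{L}(\mathbf{x}_k)\neq\mathbf{0}$, assume $\varepsilon\le L\|\mathbf{g}_k\|^2$ and that $\mathcal{L}$ is convex on the segment $[\mathbf{x}_k',\mathbf{x}_k]$, and let $\mathbf{x}_{k+1}$ be produced by one FCM step (as in the context). Then, with $c=\min\{\eta_{\mathrm{FCM}}/(2L),\,1/(8L)\}$, $$\mathcal{L}(\mathbf{x}_{k+1})\le\mathcal{L}(\mathbf{x}_k)-c\,\|\nabla\mathcal{L}(\mathbf{x}_k)\|^2.$$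
   Context: One FCM step from $\mathbf{x}_k$: $\mathbf{g}_k=\nabla\mathcal{L}(\mathbf{x}_k)$, $\delta_k=\delta_0\,\|\mathbf{x}_k\|/\|\mathbf{g}_k\|$, $\mathbf{x}_k'=\mathbf{x}_k-\delta_k\mathbf{g}_k$, $\mathbf{g}_k'=\nabla\mathcal{L}(\mathbf{x}_k')$, $\mathbf{h}_k=(\mathbf{g}_k-\mathbf{g}_k')/\delta_k$, $\alpha_k^{\mathrm{raw}}=\|\mathbf{g}_k\|^2/(\langle\mathbf{g}_k,\mathbf{h}_k\rangle+\varepsilon)$ (with $\alpha_k^{\mathrm{raw}}=+\infty$ if the denominator is $0$), $\alpha_k=\min\{\alpha_k^{\mathrm{raw}},1/L\}$. Single Armijo check: if $\mathcal{L}(\mathbf{x}_k-\alpha_k\mathbf{g}_k)>\mathcal{L}(\mathbf{x}_k)-\eta_{\mathrm{FCM}}\,\alpha_k\|\mathbf{g}_k\|^2$, replace $\alpha_k$ by $\alpha_k/2$ (once, with no further check). Then $\mathbf{x}_{k+1}=\mathbf{x}_k-\alpha_k\mathbf{g}_k$. *)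

theory Defs
  imports "HOL-Analysis.Analysis"
begin

text \<open>One FCM step. The loss is f, its gradient is the function G,
 Lc is the Lipschitz constant L, d0 = delta_0, eps = epsilon, eta = eta_FCM.\<close>

definition fcm_delta :: "(real^'n \<Rightarrow> real^'n) \<Rightarrow> real \<Rightarrow> real^'n \<Rightarrow> real" where
  "fcm_delta G d0 x = d0 * norm x / norm (G x)"

definition fcm_xprime :: "(real^'n \<Rightarrow> real^'n) \<Rightarrow> real \<Rightarrow> real^'n \<Rightarrow> real^'n" where
  "fcm_xprime G d0 x = x - fcm_delta G d0 x *\<^sub>R G x"

definition fcm_h :: "(real^'n \<Rightarrow> real^'n) \<Rightarrow> real \<Rightarrow> real^'n \<Rightarrow> real^'n" where
  "fcm_h G d0 x = (1 / fcm_delta G d0 x) *\<^sub>R (G x - G (fcm_xprime G d0 x))"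

text \<open>alpha = min(alpha_raw, 1/L), where alpha_raw = +infinity if the denominator vanishes.\<close>
definition fcm_alpha :: "(real^'n \<Rightarrow> real^'n) \<Rightarrow> real \<Rightarrow> real \<Rightarrow> real \<Rightarrow> real^'n \<Rightarrow> real" where
  "fcm_alpha G Lc d0 eps x =
     (let den = G x \<bullet> fcm_h G d0 x + eps
      in if den = 0 then 1 / Lc else min ((norm (G x))\<^sup>2 / den) (1 / Lc))"

definition fcm_alpha_final :: "(real^'n \<Rightarrow> real) \<Rightarrow> (real^'n \<Rightarrow> real^'n) \<Rightarrow> real \<Rightarrow> real \<Rightarrow> real \<Rightarrow> real \<Rightarrow> real^'n \<Rightarrow> real" where
  "fcm_alpha_final f G Lc d0 eps eta x =
     (let a = fcm_alpha G Lc d0 eps x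
      in if f (x - a *\<^sub>R G x) > f x - eta * a * (norm (G x))\<^sup>2 then a / 2 else a)"

definition fcm_step :: "(real^'n \<Rightarrow> real) \<Rightarrow> (real^'n \<Rightarrow> real^'n) \<Rightarrow> real \<Rightarrow> real \<Rightarrow> real \<Rightarrow> real \<Rightarrow> real^'n \<Rightarrow> real^'n" where
  "fcm_step f G Lc d0 eps eta x = x - fcm_alpha_final f G Lc d0 eps eta x *\<^sub>R G x"

end

theory Submission
  imports Defs
begin

text \<open>Convexity of the loss on the probe segment [x', x] makes the gradient monotone there, so the
  finite-difference curvature <g, h> is nonnegative; the Lipschitz bound caps it by L |g|^2.
  With eps <= L |g|^2 the step size therefore lies in [1/(2L), 1/L]. By the descent lemma every
  step s <= 1/L decreases the loss by at least s/2 |g|^2: if the Armijo test passes the decrease is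
  eta alpha |g|^2 >= eta/(2L) |g|^2, otherwise the halved step still gives alpha/4 |g|^2 >= |g|^2/(8L).\<close>

lemma has_real_derivative_along_line:
  fixes f :: "'a::real_inner \<Rightarrow> real"
  assumes grad: "\<And>y. (f has_derivative (\<lambda>h. G y \<bullet> h)) (at y)"
  shows "((\<lambda>t. f (a + t *\<^sub>R v)) has_real_derivative (G (a + t *\<^sub>R v) \<bullet> v)) (at t)"
proof -
  have line: "((\<lambda>t. a + t *\<^sub>R v) has_derivative (\<lambda>h. h *\<^sub>R v)) (at t)"
    by (auto intro!: derivative_eq_intros)
  have "((f \<circ> (\<lambda>t. a + t *\<^sub>R v)) has_derivative ((\<lambda>h. G (a + t *\<^sub>R v) \<bullet> h) \<circ> (\<lambda>h. h *\<^sub>R v))) (at t)"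
    by (rule diff_chain_at[OF line grad])
  moreover have "(\<lambda>h. G (a + t *\<^sub>R v) \<bullet> h) \<circ> (\<lambda>h. h *\<^sub>R v) = (*) (G (a + t *\<^sub>R v) \<bullet> v)"
    by (auto simp: fun_eq_iff mult.commute)
  ultimately show ?thesis
    unfolding has_field_derivative_def by (simp add: o_def)
qed

lemma convex_on_segment_gradient_le:
  fixes f :: "'a::real_inner \<Rightarrow> real"
  assumes grad: "\<And>y. (f has_derivative (\<lambda>h. G y \<bullet> h)) (at y)"
    and cvx: "convex_on (closed_segment a b) f"
  shows "G a \<bullet> (b - a) \<le> f b - f a"
proof -
  let ?q = "\<lambda>t. (f (a + t *\<^sub>R (b - a)) - f a) / t"
  have "((\<lambda>t. f (a + t *\<^sub>R (b - a))) has_real_derivative (G a \<bullet> (b - a))) (at 0)"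
    using has_real_derivative_along_line[OF grad, of a "b - a" 0] by simp
  then have "(?q \<longlongrightarrow> G a \<bullet> (b - a)) (at 0)"
    unfolding has_field_derivative_iff by simp
  then have lim: "(?q \<longlongrightarrow> G a \<bullet> (b - a)) (at_right 0)"
    by (rule filterlim_mono) (auto simp: at_le)
  have "eventually (\<lambda>t. ?q t \<le> f b - f a) (at_right 0)"
  proof (rule eventually_at_rightI[of 0 1])
    fix t :: real
    assume "t \<in> {0<..<1}"
    then have t: "0 < t" "t < 1" by auto
    have line: "a + t *\<^sub>R (b - a) = (1 - t) *\<^sub>R a + t *\<^sub>R b"
      by (simp add: algebra_simps)
    have "f (a + t *\<^sub>R (b - a)) \<le> (1 - t) * f a + t * f b"
      unfolding line using t by (intro convex_onD[OF cvx]) auto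
    with t show "?q t \<le> f b - f a"
      by (simp add: divide_simps algebra_simps)
  qed simp
  then show ?thesis
    by (rule tendsto_upperbound[OF lim]) simp
qed

lemma convex_on_segment_gradient_monotone:
  fixes f :: "'a::real_inner \<Rightarrow> real"
  assumes grad: "\<And>y. (f has_derivative (\<lambda>h. G y \<bullet> h)) (at y)"
    and cvx: "convex_on (closed_segment a b) f"
  shows "0 \<le> (G b - G a) \<bullet> (b - a)"
proof -
  have "G a \<bullet> (b - a) \<le> f b - f a"
    by (rule convex_on_segment_gradient_le[OF grad cvx])
  moreover have "G b \<bullet> (a - b) \<le> f a - f b"
    using cvx by (intro convex_on_segment_gradient_le[OF grad]) (simp add: closed_segment_commute)
  ultimately show ?thesis
    by (simp add: inner_diff_left inner_diff_right)
qed

lemma lipschitz_gradient_descent_lemma: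
  fixes f :: "'a::real_inner \<Rightarrow> real"
  assumes grad: "\<And>y. (f has_derivative (\<lambda>h. G y \<bullet> h)) (at y)"
    and lip: "\<And>y z. norm (G y - G z) \<le> L * norm (y - z)"
  shows "f (x + v) \<le> f x + G x \<bullet> v + L / 2 * (norm v)\<^sup>2"
proof -
  define \<psi> where "\<psi> t = f (x + t *\<^sub>R v) - t * (G x \<bullet> v) - L / 2 * t\<^sup>2 * (norm v)\<^sup>2" for t
  have D: "(\<psi> has_real_derivative (G (x + t *\<^sub>R v) \<bullet> v - G x \<bullet> v - L * t * (norm v)\<^sup>2)) (at t)" for t
    unfolding \<psi>_def
    by (auto intro!: derivative_eq_intros has_real_derivative_along_line[OF grad]
        simp: power2_eq_square)
  have "\<psi> 1 \<le> \<psi> 0"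
  proof (rule DERIV_nonpos_imp_decreasing_open[of 0 1 \<psi>])
    fix t :: real
    assume t: "0 < t" "t < 1"
    have "G (x + t *\<^sub>R v) \<bullet> v - G x \<bullet> v = (G (x + t *\<^sub>R v) - G x) \<bullet> v"
      by (simp add: inner_diff_left)
    also have "\<dots> \<le> norm (G (x + t *\<^sub>R v) - G x) * norm v"
      by (rule norm_cauchy_schwarz)
    also have "\<dots> \<le> L * norm (t *\<^sub>R v) * norm v"
      using lip[of "x + t *\<^sub>R v" x] by (intro mult_right_mono) auto
    also have "\<dots> = L * t * (norm v)\<^sup>2"
      using t by (simp add: power2_eq_square)
    finally show "\<exists>y. (\<psi> has_real_derivative y) (at t) \<and> y \<le> 0"
      using D by force
  next
    show "continuous_on {0..1} \<psi>"
      using D by (meson DERIV_isCont continuous_at_imp_continuous_on)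
  qed simp
  then show ?thesis
    unfolding \<psi>_def by simp
qed

lemma gradient_step_decrease:
  fixes f :: "'a::real_inner \<Rightarrow> real"
  assumes grad: "\<And>y. (f has_derivative (\<lambda>h. G y \<bullet> h)) (at y)"
    and lip: "\<And>y z. norm (G y - G z) \<le> L * norm (y - z)"
    and s: "0 < s" "s \<le> 1 / L"
  shows "f (x - s *\<^sub>R G x) \<le> f x - s / 2 * (norm (G x))\<^sup>2"
proof -
  have "L > 0"
    using s by (meson divide_le_0_1_iff less_le_trans not_le)
  with s have "L * s \<le> 1"
    by (simp add: field_simps)
  have "f (x - s *\<^sub>R G x) \<le> f x + G x \<bullet> (- s *\<^sub>R G x) + L / 2 * (norm (- s *\<^sub>R G x))\<^sup>2"
    using lipschitz_gradient_descent_lemma[OF grad lip, of x "- s *\<^sub>R G x"] by simp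
  also have "\<dots> = f x - s * (norm (G x))\<^sup>2 + (L * s) * (s / 2 * (norm (G x))\<^sup>2)"
    by (simp add: power_mult_distrib power2_norm_eq_inner[symmetric] power2_eq_square)
  also have "\<dots> \<le> f x - s * (norm (G x))\<^sup>2 + 1 * (s / 2 * (norm (G x))\<^sup>2)"
    using \<open>L * s \<le> 1\<close> s by (intro add_left_mono mult_right_mono) auto
  finally show ?thesis
    by simp
qed

lemma fcm_curvature_bounds:
  fixes G :: "real^'n \<Rightarrow> real^'n"
  assumes grad: "\<And>y. (f has_derivative (\<lambda>h. G y \<bullet> h)) (at y)"
    and lip: "\<And>y z. norm (G y - G z) \<le> L * norm (y - z)"
    and d0: "d0 > 0" and x: "x \<noteq> 0" and g: "G x \<noteq> 0"
    and cvx: "convex_on (closed_segment (fcm_xprime G d0 x) x) f"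
  shows "0 \<le> G x \<bullet> fcm_h G d0 x" and "G x \<bullet> fcm_h G d0 x \<le> L * (norm (G x))\<^sup>2"
proof -
  define \<delta> where "\<delta> = fcm_delta G d0 x"
  define x' where "x' = fcm_xprime G d0 x"
  have \<delta>: "\<delta> > 0"
    using x g d0 unfolding \<delta>_def fcm_delta_def by simp
  have x': "x - x' = \<delta> *\<^sub>R G x"
    unfolding x'_def fcm_xprime_def \<delta>_def by simp
  have gh: "G x \<bullet> fcm_h G d0 x = (G x - G x') \<bullet> G x / \<delta>"
    unfolding fcm_h_def \<delta>_def[symmetric] x'_def[symmetric] by (simp add: inner_commute)
  have "0 \<le> (G x - G x') \<bullet> (x - x')"
    using convex_on_segment_gradient_monotone[OF grad cvx[folded x'_def]] .
  then show "0 \<le> G x \<bullet> fcm_h G d0 x"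
    using \<delta> unfolding gh x' by (simp add: zero_le_mult_iff)
  have "(G x - G x') \<bullet> G x \<le> norm (G x - G x') * norm (G x)"
    by (rule norm_cauchy_schwarz)
  also have "\<dots> \<le> L * norm (x - x') * norm (G x)"
    using lip[of x x'] by (intro mult_right_mono) auto
  also have "\<dots> = \<delta> * (L * (norm (G x))\<^sup>2)"
    using \<delta> unfolding x' by (simp add: power2_eq_square)
  finally show "G x \<bullet> fcm_h G d0 x \<le> L * (norm (G x))\<^sup>2"
    using \<delta> unfolding gh by (simp add: divide_le_eq mult.commute)
qed

lemma fcm_alpha_bounds:
  fixes G :: "real^'n \<Rightarrow> real^'n"
  assumes L: "L > 0" and eps: "0 \<le> eps" "eps \<le> L * (norm (G x))\<^sup>2"
    and curv: "0 \<le> G x \<bullet> fcm_h G d0 x" "G x \<bullet> fcm_h G d0 x \<le> L * (norm (G x))\<^sup>2"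
  shows "1 / (2 * L) \<le> fcm_alpha G L d0 eps x" and "fcm_alpha G L d0 eps x \<le> 1 / L"
proof -
  define den where "den = G x \<bullet> fcm_h G d0 x + eps"
  have \<alpha>: "fcm_alpha G L d0 eps x = (if den = 0 then 1 / L else min ((norm (G x))\<^sup>2 / den) (1 / L))"
    unfolding fcm_alpha_def den_def by (simp add: Let_def)
  then show "fcm_alpha G L d0 eps x \<le> 1 / L"
    by simp
  have "1 / (2 * L) \<le> (norm (G x))\<^sup>2 / den" if "den \<noteq> 0"
  proof -
    have "0 < den" "den \<le> 2 * L * (norm (G x))\<^sup>2"
      using that curv eps unfolding den_def by auto
    then show ?thesis
      using L by (simp add: divide_simps mult.commute)
  qed
  then show "1 / (2 * L) \<le> fcm_alpha G L d0 eps x"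
    using L unfolding \<alpha> by (simp add: frac_le)
qed

lemma armijo_halving_decrease:
  fixes f :: "'a::real_normed_vector \<Rightarrow> real"
  assumes descent: "\<And>s. 0 < s \<Longrightarrow> s \<le> 1 / L \<Longrightarrow> f (x - s *\<^sub>R g) \<le> f x - s / 2 * (norm g)\<^sup>2"
    and L: "L > 0" and eta: "eta > 0" and a: "1 / (2 * L) \<le> a" "a \<le> 1 / L"
  shows "f (x - (if f (x - a *\<^sub>R g) > f x - eta * a * (norm g)\<^sup>2 then a / 2 else a) *\<^sub>R g)
           \<le> f x - min (eta / (2 * L)) (1 / (8 * L)) * (norm g)\<^sup>2"
    (is "_ \<le> f x - ?c * _")
proof (cases "f (x - a *\<^sub>R g) > f x - eta * a * (norm g)\<^sup>2")
  case True
  have "0 < a"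
    using a(1) L by (simp add: order_less_le_trans[OF _ a(1)])
  then have "f (x - (a / 2) *\<^sub>R g) \<le> f x - a / 4 * (norm g)\<^sup>2"
    using descent[of "a / 2"] a(2) by simp
  also have "\<dots> \<le> f x - ?c * (norm g)\<^sup>2"
  proof -
    have "?c \<le> 1 / (8 * L)"
      by simp
    also have "\<dots> \<le> a / 4"
      using a(1) L by (simp add: field_simps)
    finally show ?thesis
      by (intro diff_left_mono mult_right_mono) simp_all
  qed
  finally show ?thesis
    using True by simp
next
  case False
  then have "f (x - a *\<^sub>R g) \<le> f x - eta * a * (norm g)\<^sup>2"
    by simp
  also have "\<dots> \<le> f x - ?c * (norm g)\<^sup>2"
  proof -
    have "?c \<le> eta * (1 / (2 * L))"
      by simp
    also have "\<dots> \<le> eta * a"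
      using mult_left_mono[OF a(1), of eta] eta by simp
    finally show ?thesis
      by (intro diff_left_mono mult_right_mono) simp_all
  qed
  finally show ?thesis
    using False by simp
qed

theorem mainTheorem3:
  fixes f :: "real^'n \<Rightarrow> real" and G :: "real^'n \<Rightarrow> real^'n"
    and Lc d0 eps eta :: real and x :: "real^'n"
  assumes grad: "\<And>y. (f has_derivative (\<lambda>h. G y \<bullet> h)) (at y)"
    and lip: "\<And>y z. norm (G y - G z) \<le> Lc * norm (y - z)"
    and Lpos: "Lc > 0" and d0pos: "d0 > 0" and epsnn: "eps \<ge> 0" and etapos: "eta > 0"
    and xnz: "x \<noteq> 0" and gnz: "G x \<noteq> 0"
    and epsle: "eps \<le> Lc * (norm (G x))\<^sup>2"
    and cvx: "convex_on (closed_segment (fcm_xprime G d0 x) x) f"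
  shows "f (fcm_step f G Lc d0 eps eta x)
           \<le> f x - min (eta / (2 * Lc)) (1 / (8 * Lc)) * (norm (G x))\<^sup>2"
proof -
  note curv = fcm_curvature_bounds[OF grad lip d0pos xnz gnz cvx]
  note \<alpha> = fcm_alpha_bounds[OF Lpos epsnn epsle curv]
  have "f (x - fcm_alpha_final f G Lc d0 eps eta x *\<^sub>R G x)
          \<le> f x - min (eta / (2 * Lc)) (1 / (8 * Lc)) * (norm (G x))\<^sup>2"
    unfolding fcm_alpha_final_def Let_def
    by (rule armijo_halving_decrease[OF gradient_step_decrease[OF grad lip] Lpos etapos \<alpha>])
  then show ?thesis
    by (simp add: fcm_step_def)
qed

end
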